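(* Let $k\ge 2$ be even and $n>k/2$. Any encoding that, given access to encodings of both rows of a $2\times n$ array $A$ answering unsorted (or sorted) 1-sided Top-$k$ queries on each row, answers all unsorted 3-sided Top-$k$ queries on $A$ must use at least $\lceil (n-k/2)\lg(1+\sqrt2)\rceil-o(n)\approx 1.27(n-k/2)-o(n)$ additional bits (in the worst case over arrays $A$). Equivalently, there is a family of $2\times n$ arrays with distinct entries, all of whose rows give identical answers to every 1-sided Top-$k$ query on that row, containing at least $2^{(n-k/2)\lg(1+\sqrt2)-o(n)}$ arrays with pairwise distinct answer sets to the unsorted 3-sided Top-$k$ queries.
   Context: All arrays have pairwise distinct entries from a totally ordered set. For a 1D array $B[1..n]$, the 1-sided query Top-$k(1,i,B)$ returns the positions of the $k$ largest values of $B[1..i]$ (all positions if $i\le k$); sorted queries report these positions in decreasing order of value, unsorted queries in arbitrary order. For a $2\times n$ array $A$, a 3-sided Top-$k$ query Top-$k(r,s,1,b,A)$ with $1\le r\le s\le 2$, $1\le b\le n$ returns the positions of the $k$ largest values in $A[r..s][1..b]$ (rows $r..s$, columns $1..b$). "Additional bits" means the length of the bit string that, together with the given row encodings, determines all answers. *)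

theory Defs
  imports Complex_Main "HOL-Library.Landau_Symbols"
begin

text \<open>Positions of the k largest values of v over the finite position set S
  (all of S if card S \<le> k); values are assumed pairwise distinct on S.\<close>
definition topk_set :: "nat \<Rightarrow> 'p set \<Rightarrow> ('p \<Rightarrow> 'v::linorder) \<Rightarrow> 'p set" where
  "topk_set k S v = {p \<in> S. card {q \<in> S. v p < v q} < k}"

definition topk_sorted :: "nat \<Rightarrow> 'p set \<Rightarrow> ('p \<Rightarrow> 'v::linorder) \<Rightarrow> 'p list" where
  "topk_sorted k S v =
     (THE xs. set xs = topk_set k S v \<and> distinct xs \<and> sorted_wrt (\<lambda>p q. v p > v q) xs)"

definition grid :: "nat \<Rightarrow> (nat \<times> nat) set" where
  "grid n = {1..2} \<times> {1..n}"

definition distinct_array :: "nat \<Rightarrow> (nat \<times> nat \<Rightarrow> 'v) \<Rightarrow> bool" where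
  "distinct_array n A \<longleftrightarrow> inj_on A (grid n)"

definition row_query :: "nat \<Rightarrow> (nat \<times> nat \<Rightarrow> 'v::linorder) \<Rightarrow> nat \<Rightarrow> nat \<Rightarrow> nat list" where
  "row_query k A r i = topk_sorted k {1..i} (\<lambda>j. A (r, j))"

definition three_sided :: "nat \<Rightarrow> (nat \<times> nat \<Rightarrow> 'v::linorder) \<Rightarrow> nat \<Rightarrow> nat \<Rightarrow> nat \<Rightarrow> (nat \<times> nat) set" where
  "three_sided k A r s b = topk_set k ({r..s} \<times> {1..b}) A"

definition three_sided_answers ::
  "nat \<Rightarrow> nat \<Rightarrow> (nat \<times> nat \<Rightarrow> 'v::linorder) \<Rightarrow> nat \<times> nat \<times> nat \<Rightarrow> (nat \<times> nat) set" where
  "three_sided_answers k n A = (\<lambda>(r, s, b).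
     if 1 \<le> r \<and> r \<le> s \<and> s \<le> 2 \<and> 1 \<le> b \<and> b \<le> n then three_sided k A r s b else {})"

end

theory Submission
  imports Defs
begin

text \<open>Fix \<open>j = k/2\<close> and \<open>m = n - j\<close>. Columns \<open>1..j-1\<close> of both rows hold the \<open>k - 2\<close> largest
  entries; each later column carries a letter from \<open>{0,1,2}\<close>, and the entries are laid out so that
  both rows are increasing there, whatever the letters. Hence all 1-sided row queries agree. The
  3-sided query over both rows and columns \<open>1..c+1\<close> reports the prefix block together with the two
  largest of the four entries in columns \<open>c, c+1\<close>, and the offsets are chosen so that \<open>(r, c)\<close> is
  among them exactly when column \<open>c+1\<close> carries letter \<open>r\<close>. This works as long as no letter 1 is
  adjacent to a letter 2, so the answers determine every word of length \<open>m\<close> over \<open>{0,1,2}\<close> avoiding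
  the factors 12 and 21. These words obey \<open>a(m+2) \<ge> 2 a(m+1) + a(m)\<close>, hence number at least
  \<open>(1 + \<surd>2)^m\<close>; no \<open>o(n)\<close> correction is needed.\<close>

lemma topk_set_cong_order:
  assumes "\<And>p q. p \<in> S \<Longrightarrow> q \<in> S \<Longrightarrow> v p < v q \<longleftrightarrow> v' p < v' q"
  shows "topk_set k S v = topk_set k S v'"
proof -
  have "{q \<in> S. v p < v q} = {q \<in> S. v' p < v' q}" if "p \<in> S" for p
    using assms that by auto
  then show ?thesis
    unfolding topk_set_def by (auto intro: Collect_cong)
qed

lemma topk_sorted_cong_order:
  assumes same_order: "\<And>p q. p \<in> S \<Longrightarrow> q \<in> S \<Longrightarrow> v p < v q \<longleftrightarrow> v' p < v' q"
  shows "topk_sorted k S v = topk_sorted k S v'"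
proof -
  have sorted_iff: "sorted_wrt (\<lambda>p q. v p > v q) xs \<longleftrightarrow> sorted_wrt (\<lambda>p q. v' p > v' q) xs"
    if "set xs \<subseteq> S" for xs
    using that same_order unfolding sorted_wrt_iff_nth_less by (auto dest!: nth_mem simp: subset_iff)
  have "topk_set k S v \<subseteq> S"
    unfolding topk_set_def by auto
  moreover have "topk_set k S v = topk_set k S v'"
    using same_order by (rule topk_set_cong_order)
  ultimately show ?thesis
    unfolding topk_sorted_def using sorted_iff by (intro arg_cong[where f = The] ext) auto
qed

lemma silver_ratio_power_le:
  fixes a :: "nat \<Rightarrow> real"
  assumes "1 \<le> a 0" and "1 + sqrt 2 \<le> a 1"
    and recurrence: "\<And>m. 2 * a (Suc m) + a m \<le> a (Suc (Suc m))"
  shows "(1 + sqrt 2) ^ m \<le> a m"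
proof -
  have silver_sq: "(1 + sqrt 2) ^ 2 = 2 * (1 + sqrt 2) + 1"
    by (simp add: power2_eq_square algebra_simps)
  have "(1 + sqrt 2) ^ m \<le> a m \<and> (1 + sqrt 2) ^ Suc m \<le> a (Suc m)"
  proof (induction m)
    case 0
    then show ?case using assms(1,2) by simp
  next
    case (Suc m)
    have "(1 + sqrt 2) ^ Suc (Suc m) = 2 * (1 + sqrt 2) ^ Suc m + (1 + sqrt 2) ^ m"
      using silver_sq by (simp add: power_add[symmetric] algebra_simps)
    also have "\<dots> \<le> 2 * a (Suc m) + a m"
      using Suc.IH by simp
    also have "\<dots> \<le> a (Suc (Suc m))"
      by (rule recurrence)
    finally show ?case using Suc.IH by simp
  qed
  then show ?thesis ..
qed

text \<open>Since letters are at most 2, \<open>a + b \<noteq> 3\<close> excludes exactly the factors 12 and 21.\<close>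

fun admissible :: "nat list \<Rightarrow> bool" where
  "admissible [] = True"
| "admissible [a] = (a \<le> 2)"
| "admissible (a # b # w) = (a \<le> 2 \<and> a + b \<noteq> 3 \<and> admissible (b # w))"

lemma admissible_Cons:
  "admissible (a # w) \<longleftrightarrow> a \<le> 2 \<and> admissible w \<and> (w \<noteq> [] \<longrightarrow> a + hd w \<noteq> 3)"
  by (cases w) auto

lemma admissible_letter_le: "admissible w \<Longrightarrow> x \<in> set w \<Longrightarrow> x \<le> 2"
  by (induction w rule: admissible.induct) auto

lemma admissible_nth_Suc:
  "admissible w \<Longrightarrow> Suc i < length w \<Longrightarrow> w ! i + w ! Suc i \<noteq> 3"
proof (induction w arbitrary: i rule: admissible.induct)
  case (3 a b w)
  then show ?case by (cases i) auto
qed auto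

definition admissible_words :: "nat \<Rightarrow> nat list set" where
  "admissible_words m = {w. length w = m \<and> admissible w}"

lemma finite_admissible_words: "finite (admissible_words m)"
proof (rule finite_subset)
  show "admissible_words m \<subseteq> {w. set w \<subseteq> {..2} \<and> length w = m}"
    unfolding admissible_words_def using admissible_letter_le by auto
qed (simp add: finite_lists_length_eq)

lemma card_admissible_words_recurrence:
  "2 * card (admissible_words (Suc m)) + card (admissible_words m)
     \<le> card (admissible_words (Suc (Suc m)))"
proof -
  \<comment> \<open>Prefixing 0, prefixing the one of 1 and 2 that cannot clash with the head, and
     prefixing 20 are injections with disjoint images.\<close>
  define W where "W = admissible_words"
  let ?Zero = "(\<lambda>w. 0 # w) ` W (Suc m)"
  let ?Head = "(\<lambda>w. (if hd w = 2 then 2 else 1) # w) ` W (Suc m)"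
  let ?TwoZero = "(\<lambda>w. 2 # 0 # w) ` W m"
  have head: "w \<noteq> [] \<and> hd w \<le> 2" if "w \<in> W (Suc m)" for w
    using that admissible_letter_le[of w "hd w"] unfolding W_def admissible_words_def
    by (cases w) auto
  have "0 # w \<in> W (Suc (Suc m))" "(if hd w = 2 then 2 else 1) # w \<in> W (Suc (Suc m))"
    if "w \<in> W (Suc m)" for w
    using that head[OF that] unfolding W_def admissible_words_def by (auto simp: admissible_Cons)
  moreover have "2 # 0 # w \<in> W (Suc (Suc m))" if "w \<in> W m" for w
    using that admissible_letter_le[OF _ hd_in_set, of w] unfolding W_def admissible_words_def
    by (auto simp: admissible_Cons)
  ultimately have subset: "?Zero \<union> ?Head \<union> ?TwoZero \<subseteq> W (Suc (Suc m))"
    by auto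
  have finite_W: "finite (W m')" for m'
    unfolding W_def by (rule finite_admissible_words)
  have "?Zero \<inter> ?Head = {}"
    by (auto split: if_splits)
  moreover have "(?Zero \<union> ?Head) \<inter> ?TwoZero = {}"
    using head by (fastforce simp: neq_Nil_conv)
  ultimately have "card (?Zero \<union> ?Head \<union> ?TwoZero) = card ?Zero + card ?Head + card ?TwoZero"
    using finite_W by (simp add: card_Un_disjoint)
  also have "\<dots> = 2 * card (W (Suc m)) + card (W m)"
    by (simp add: card_image inj_on_def)
  finally show ?thesis
    unfolding W_def[symmetric] using card_mono[OF finite_W subset] by simp
qed

lemma card_admissible_words_ge: "(1 + sqrt 2) ^ m \<le> real (card (admissible_words m))"
proof (rule silver_ratio_power_le)
  have "sqrt 2 \<le> 2"
    by (simp add: real_sqrt_le_iff[of 2 4, simplified])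
  moreover have "admissible_words 1 = {[0], [1], [2]}"
    by (auto simp: admissible_words_def length_Suc_conv)
  ultimately show "1 + sqrt 2 \<le> real (card (admissible_words 1))"
    by simp
  have "admissible_words 0 = {[]}"
    by (auto simp: admissible_words_def)
  then show "1 \<le> real (card (admissible_words 0))"
    by simp
  show "2 * real (card (admissible_words (Suc m))) + real (card (admissible_words m))
          \<le> real (card (admissible_words (Suc (Suc m))))" for m
    using card_admissible_words_recurrence[of m] by linarith
qed

text \<open>Column \<open>i \<ge> j\<close> of row \<open>r\<close> holds \<open>10 i\<close> plus an offset that is 12 exactly when the letter of
  column \<open>i + 1\<close> is \<open>r\<close> (and that of column \<open>i\<close> is not \<open>3 - r\<close>): this is what lifts \<open>(r, i)\<close> among
  the two largest entries of columns \<open>i, i + 1\<close>.\<close>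

definition letter_offset :: "(nat \<Rightarrow> nat) \<Rightarrow> nat \<Rightarrow> nat \<Rightarrow> nat" where
  "letter_offset u r i = (if u i + r = 3 then 0 else if u (Suc i) = r then 12 else 5 + r)"

definition witness_array :: "nat \<Rightarrow> nat \<Rightarrow> (nat \<Rightarrow> nat) \<Rightarrow> nat \<times> nat \<Rightarrow> nat" where
  "witness_array n j u = (\<lambda>(r, i).
     if i < j then 10 * n + 20 + 2 * i + r else 10 * i + letter_offset u r i)"

lemma witness_array_high: "i < j \<Longrightarrow> witness_array n j u (r, i) = 10 * n + 20 + 2 * i + r"
  by (simp add: witness_array_def)

lemma witness_array_low: "j \<le> i \<Longrightarrow> witness_array n j u (r, i) = 10 * i + letter_offset u r i"
  by (simp add: witness_array_def)

lemma letter_offset_le: "r \<le> 2 \<Longrightarrow> letter_offset u r i \<le> 12"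
  by (simp add: letter_offset_def)

definition column_rank :: "nat \<Rightarrow> nat \<Rightarrow> nat \<Rightarrow> nat" where
  "column_rank n j i = (if i < j then Suc n + i else i)"

lemma witness_array_row_mono:
  assumes "r \<le> 2" "p \<le> n" "q \<le> n" "column_rank n j p < column_rank n j q"
  shows "witness_array n j u (r, p) < witness_array n j u (r, q)"
proof (cases "q < j")
  case True
  then show ?thesis
    using assms witness_array_low[of j p n u r] letter_offset_le[of r u p]
    by (cases "p < j") (simp_all add: column_rank_def witness_array_high)
next
  case False
  then have "j \<le> p" "p < q"
    using assms by (auto simp: column_rank_def split: if_splits)
  moreover have "letter_offset u r p < 10 + letter_offset u r (Suc p)"
    using \<open>r \<le> 2\<close> by (auto simp: letter_offset_def; presburger)
  ultimately show ?thesis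
    using letter_offset_le[of r u p] letter_offset_le[of r u q] \<open>r \<le> 2\<close> \<open>\<not> q < j\<close>
    by (cases "q = Suc p") (auto simp: witness_array_low)
qed

lemma witness_array_row_less_iff:
  assumes "r \<le> 2" "p \<le> n" "q \<le> n"
  shows "witness_array n j u (r, p) < witness_array n j u (r, q) \<longleftrightarrow>
    column_rank n j p < column_rank n j q"
proof -
  have "column_rank n j p = column_rank n j q \<Longrightarrow> p = q"
    using assms by (auto simp: column_rank_def split: if_splits)
  then show ?thesis
    using assms witness_array_row_mono[of r q n p j u] witness_array_row_mono[of r p n q j u]
    by (metis less_asym linorder_neq_iff)
qed

lemma row_query_witness_array:
  assumes "r \<le> 2" "i \<le> n"
  shows "row_query k (witness_array n j u) r i = row_query k (witness_array n j u') r i"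
  unfolding row_query_def
  by (rule topk_sorted_cong_order) (use assms witness_array_row_less_iff in auto)

lemma witness_array_rows_disjoint:
  assumes "p \<le> n" "q \<le> n"
  shows "witness_array n j u (1, p) \<noteq> witness_array n j u (2, q)"
proof (cases "p < j"; cases "q < j")
  assume "\<not> p < j" "\<not> q < j"
  then show ?thesis
    by (auto simp: witness_array_low letter_offset_def split: if_splits; presburger)
next
  assume "p < j" "\<not> q < j"
  then show ?thesis
    using assms letter_offset_le[of 2 u q] by (simp add: witness_array_low witness_array_high)
next
  assume "\<not> p < j" "q < j"
  then show ?thesis
    using assms letter_offset_le[of 1 u p] by (simp add: witness_array_low witness_array_high)
qed (simp add: witness_array_high; presburger)

lemma inj_on_witness_array: "inj_on (witness_array n j u) (grid n)"
proof (rule inj_onI, clarify)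
  fix r p r' q
  assume in_grid: "(r, p) \<in> grid n" "(r', q) \<in> grid n"
    and eq: "witness_array n j u (r, p) = witness_array n j u (r', q)"
  then have rows: "r \<in> {1, 2}" "r' \<in> {1, 2}" and bounds: "p \<le> n" "q \<le> n"
    by (auto simp: grid_def)
  then have "r = r'"
    using eq witness_array_rows_disjoint[of p n q j u] witness_array_rows_disjoint[of q n p j u]
    by auto
  moreover have "p = q"
  proof (rule ccontr)
    assume "p \<noteq> q"
    then have "column_rank n j p \<noteq> column_rank n j q"
      using bounds by (auto simp: column_rank_def split: if_splits)
    then show False
      using eq \<open>r = r'\<close> rows bounds witness_array_row_less_iff[of r p n q j u]
        witness_array_row_less_iff[of r q n p j u]
      by (auto simp: neq_iff)
  qed
  ultimately show "r = r' \<and> p = q" ..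
qed

lemma witness_array_above_if_letter:
  assumes row: "r \<in> {1, 2}" and letter: "u (Suc c) = r" and no_12: "u c + u (Suc c) \<noteq> 3"
    and "j \<le> c"
  shows "{q \<in> {1..2} \<times> {1..Suc c}. witness_array n j u (r, c) < witness_array n j u q}
    \<subseteq> insert (r, Suc c) ({1..2} \<times> {1..<j})"
proof (rule subsetI)
  fix q
  assume q: "q \<in> {q \<in> {1..2} \<times> {1..Suc c}. witness_array n j u (r, c) < witness_array n j u q}"
  obtain r' i where q_eq: "q = (r', i)"
    by fastforce
  have at_rc: "witness_array n j u (r, c) = 10 * c + 12"
    using letter no_12 \<open>j \<le> c\<close> by (simp add: witness_array_low letter_offset_def)
  show "q \<in> insert (r, Suc c) ({1..2} \<times> {1..<j})"
  proof (cases "i < j")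
    case True
    then show ?thesis
      using q q_eq by auto
  next
    case False
    then have r': "r' \<in> {1, 2}" and "i \<le> Suc c"
      and less: "witness_array n j u (r, c) < witness_array n j u (r', i)"
      and at_r'i: "witness_array n j u (r', i) = 10 * i + letter_offset u r' i"
      using q q_eq by (auto simp: witness_array_low)
    then consider "i < c" | "i = c" | "i = Suc c"
      by linarith
    then have "r' = r \<and> i = Suc c"
    proof cases
      case 1
      then show ?thesis
        using less letter_offset_le[of r' u i] r' at_rc at_r'i by auto
    next
      case 2
      then show ?thesis
        using less row r' letter at_rc at_r'i by (auto simp: letter_offset_def split: if_splits)
    next
      case 3
      then show ?thesis
        using less row r' letter at_rc at_r'i by (auto simp: letter_offset_def)
    qed
    then show ?thesis
      using q_eq by simp
  qed
qed

lemma witness_array_below_if_not_letter: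
  assumes row: "r \<in> {1, 2}" and letter: "u (Suc c) \<noteq> r" and "j \<le> c" "Suc c \<le> n"
  shows "insert (1, Suc c) (insert (2, Suc c) ({1..2} \<times> {1..<j}))
    \<subseteq> {q \<in> {1..2} \<times> {1..Suc c}. witness_array n j u (r, c) < witness_array n j u q}"
proof -
  have low: "witness_array n j u (r, c) \<le> 10 * c + 7"
    using letter row \<open>j \<le> c\<close> by (auto simp: witness_array_low letter_offset_def)
  have next_column: "10 * c + 10 \<le> witness_array n j u (r', Suc c)" for r'
    using \<open>j \<le> c\<close> by (simp add: witness_array_low)
  have high: "10 * n + 20 \<le> witness_array n j u (r', i)" if "i < j" for r' i
    using that by (simp add: witness_array_high)
  have "witness_array n j u (r, c) < witness_array n j u (r', i)"
    if "i < j \<or> i = Suc c" for r' i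
    using that low next_column[of r'] high[of i r'] \<open>Suc c \<le> n\<close> by auto
  then show ?thesis
    using \<open>j \<le> c\<close> by auto
qed

lemma witness_array_top_query_iff:
  assumes row: "r \<in> {1, 2}" and no_12: "u c + u (Suc c) \<noteq> 3"
    and j: "1 \<le> j" "j \<le> c" "Suc c \<le> n"
  shows "(r, c) \<in> topk_set (2 * j) ({1..2} \<times> {1..Suc c}) (witness_array n j u)
    \<longleftrightarrow> u (Suc c) = r"
proof -
  define G where "G = {q \<in> {1..2} \<times> {1..Suc c}. witness_array n j u (r, c) < witness_array n j u q}"
  define H :: "(nat \<times> nat) set" where "H = {1..2} \<times> {1..<j}"
  have "finite G" "finite H"
    unfolding G_def H_def by auto
  have card_H: "card H = 2 * (j - 1)"
    unfolding H_def by (simp add: card_cartesian_product)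
  have "(r, c) \<in> topk_set (2 * j) ({1..2} \<times> {1..Suc c}) (witness_array n j u) \<longleftrightarrow> card G < 2 * j"
    using row j unfolding topk_set_def G_def by auto
  also have "\<dots> \<longleftrightarrow> u (Suc c) = r"
  proof (cases "u (Suc c) = r")
    case True
    have "card G \<le> card (insert (r, Suc c) H)"
      using witness_array_above_if_letter[OF row True no_12 j(2)] \<open>finite H\<close>
      unfolding G_def H_def by (intro card_mono) auto
    also have "\<dots> \<le> card H + 1"
      using \<open>finite H\<close> by (simp add: card_insert_if)
    finally show ?thesis
      using True card_H j by simp
  next
    case False
    have "card H + 2 = card (insert (1, Suc c) (insert (2, Suc c) H))"
      using \<open>finite H\<close> j unfolding H_def by simp
    also have "\<dots> \<le> card G"
      using \<open>finite G\<close> witness_array_below_if_not_letter[of r u c j n, OF row False j(2,3)]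
      unfolding G_def H_def by (rule card_mono)
    finally show ?thesis
      using False card_H j by simp
  qed
  finally show ?thesis .
qed

text \<open>The word occupies columns \<open>j + 1, \<dots>, j + length w\<close>; all other columns carry letter 0.\<close>

definition column_letters :: "nat \<Rightarrow> nat list \<Rightarrow> nat \<Rightarrow> nat" where
  "column_letters j w i = (if j < i \<and> i - Suc j < length w then w ! (i - Suc j) else 0)"

lemma column_letters_nth: "d < length w \<Longrightarrow> column_letters j w (Suc (j + d)) = w ! d"
  by (simp add: column_letters_def)

lemma column_letters_le: "admissible w \<Longrightarrow> column_letters j w i \<le> 2"
  unfolding column_letters_def using admissible_letter_le nth_mem by fastforce

lemma column_letters_no_12:
  assumes "admissible w"
  shows "column_letters j w i + column_letters j w (Suc i) \<noteq> 3"
proof (cases "j < i \<and> Suc i - Suc j < length w")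
  case True
  then have "Suc (i - Suc j) < length w" "Suc i - Suc j = Suc (i - Suc j)"
    by auto
  then show ?thesis
    using admissible_nth_Suc[OF assms] True by (simp add: column_letters_def)
next
  case False
  then have "column_letters j w i = 0 \<or> column_letters j w (Suc i) = 0"
    by (auto simp: column_letters_def less_Suc_eq)
  then show ?thesis
    using column_letters_le[OF assms, of j i] column_letters_le[OF assms, of j "Suc i"] by auto
qed

lemma inj_on_three_sided_answers_witness_array:
  assumes "1 \<le> j"
  shows "inj_on (\<lambda>w. three_sided_answers (2 * j) (m + j) (witness_array (m + j) j (column_letters j w)))
    (admissible_words m)"
proof (rule inj_onI)
  fix w w'
  assume words: "w \<in> admissible_words m" "w' \<in> admissible_words m"
    and same_answers: "three_sided_answers (2 * j) (m + j) (witness_array (m + j) j (column_letters j w)) =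
      three_sided_answers (2 * j) (m + j) (witness_array (m + j) j (column_letters j w'))"
  show "w = w'"
  proof (rule nth_equalityI)
    show "length w = length w'"
      using words by (simp add: admissible_words_def)
    fix d
    assume "d < length w"
    define c where "c = j + d"
    have c: "j \<le> c" "Suc c \<le> m + j" and "d < length w'"
      using \<open>d < length w\<close> words unfolding c_def admissible_words_def by auto
    have "topk_set (2 * j) ({1..2} \<times> {1..Suc c}) (witness_array (m + j) j (column_letters j w)) =
      topk_set (2 * j) ({1..2} \<times> {1..Suc c}) (witness_array (m + j) j (column_letters j w'))"
      using fun_cong[OF same_answers, of "(1, 2, Suc c)"] c
      by (simp add: three_sided_answers_def three_sided_def)
    moreover have "column_letters j v c + column_letters j v (Suc c) \<noteq> 3"
      if "v \<in> admissible_words m" for v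
      using that column_letters_no_12 by (simp add: admissible_words_def)
    ultimately have "column_letters j w (Suc c) = r \<longleftrightarrow> column_letters j w' (Suc c) = r"
      if "r \<in> {1, 2}" for r
      using that words c assms witness_array_top_query_iff[where n = "m + j"] by metis
    then have "column_letters j w (Suc c) = column_letters j w' (Suc c)"
      using words column_letters_le[of w j "Suc c"] column_letters_le[of w' j "Suc c"]
      unfolding admissible_words_def by (fastforce simp: le_Suc_eq numeral_2_eq_2)
    then show "w ! d = w' ! d"
      using column_letters_nth \<open>d < length w\<close> \<open>d < length w'\<close> unfolding c_def by metis
  qed
qed

lemma powr_mult_log_eq_power:
  fixes b x :: real
  assumes "0 < b" "b \<noteq> 1" "0 < x"
  shows "b powr (real m * log b x) = x ^ m"
proof -
  have "b powr (real m * log b x) = (b powr log b x) powr real m"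
    by (simp add: powr_powr mult.commute)
  also have "\<dots> = x ^ m"
    using assms by (simp add: powr_realpow)
  finally show ?thesis .
qed

definition witness_family :: "nat \<Rightarrow> nat \<Rightarrow> (nat \<times> nat \<Rightarrow> nat) set" where
  "witness_family j m = (\<lambda>w. witness_array (m + j) j (column_letters j w)) ` admissible_words m"

lemma witness_family_properties:
  assumes "1 \<le> j"
  shows "finite (witness_family j m)"
    and "\<forall>A\<in>witness_family j m. distinct_array (m + j) A"
    and "\<forall>A\<in>witness_family j m. \<forall>A'\<in>witness_family j m. \<forall>r\<in>{1..2}. \<forall>i\<in>{1..m + j}.
           row_query k A r i = row_query k A' r i"
    and "inj_on (three_sided_answers (2 * j) (m + j)) (witness_family j m)"
    and "(1 + sqrt 2) ^ m \<le> real (card (witness_family j m))"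
proof -
  have inj: "inj_on (three_sided_answers (2 * j) (m + j) \<circ> (\<lambda>w. witness_array (m + j) j (column_letters j w)))
      (admissible_words m)"
    using inj_on_three_sided_answers_witness_array[OF assms, of m] unfolding comp_def .
  show "finite (witness_family j m)"
    unfolding witness_family_def by (simp add: finite_admissible_words)
  show "\<forall>A\<in>witness_family j m. distinct_array (m + j) A"
    unfolding witness_family_def distinct_array_def by (auto intro: inj_on_witness_array)
  show "\<forall>A\<in>witness_family j m. \<forall>A'\<in>witness_family j m. \<forall>r\<in>{1..2}. \<forall>i\<in>{1..m + j}.
      row_query k A r i = row_query k A' r i"
    unfolding witness_family_def by (auto intro: row_query_witness_array)
  show "inj_on (three_sided_answers (2 * j) (m + j)) (witness_family j m)"
    unfolding witness_family_def using inj by (rule inj_on_imageI)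
  have "card (witness_family j m) = card (admissible_words m)"
    unfolding witness_family_def using inj_on_imageI2[OF inj] by (rule card_image)
  then show "(1 + sqrt 2) ^ m \<le> real (card (witness_family j m))"
    using card_admissible_words_ge[of m] by simp
qed

theorem theorem10:
  fixes k :: nat
  assumes "even k" and "k \<ge> 2"
  shows "\<exists>g :: nat \<Rightarrow> real. g \<in> o(\<lambda>n. real n) \<and>
    (\<forall>n. real n > real k / 2 \<longrightarrow>
      (\<exists>F :: (nat \<times> nat \<Rightarrow> nat) set.
         finite F \<and>
         (\<forall>A\<in>F. distinct_array n A) \<and>
         (\<forall>A\<in>F. \<forall>A'\<in>F. \<forall>r\<in>{1..2}. \<forall>i\<in>{1..n}. row_query k A r i = row_query k A' r i) \<and>
         inj_on (three_sided_answers k n) F \<and>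
         real (card F) \<ge> 2 powr ((real n - real k / 2) * log 2 (1 + sqrt 2) - g n)))"
proof (intro exI[of _ "\<lambda>_. 0"] conjI allI impI)
  fix n :: nat
  assume "real n > real k / 2"
  obtain j where k: "k = 2 * j" and "1 \<le> j"
    using assms by (auto elim: evenE)
  define m where "m = n - j"
  have n: "n = m + j"
    using \<open>real n > real k / 2\<close> k unfolding m_def by simp
  have bound: "2 powr ((real (m + j) - real (2 * j) / 2) * log 2 (1 + sqrt 2) - 0) = (1 + sqrt 2) ^ m"
    using powr_mult_log_eq_power[of 2 "1 + sqrt 2" m] by (simp add: add_pos_nonneg)
  show "\<exists>F :: (nat \<times> nat \<Rightarrow> nat) set. finite F \<and> (\<forall>A\<in>F. distinct_array n A) \<and>
      (\<forall>A\<in>F. \<forall>A'\<in>F. \<forall>r\<in>{1..2}. \<forall>i\<in>{1..n}. row_query k A r i = row_query k A' r i) \<and>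
      inj_on (three_sided_answers k n) F \<and>
      2 powr ((real n - real k / 2) * log 2 (1 + sqrt 2) - 0) \<le> real (card F)"
    unfolding k n bound
    by (intro exI[of _ "witness_family j m"] conjI witness_family_properties[OF \<open>1 \<le> j\<close>])
qed simp

end
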